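(* (i) For every $K\ge 2$ and evenly spaced $z_1<\dots<z_K$, the set of CDRL statistics $\{s_{z_k,z_{k+1}}:k=1,\dots,K-1\}$, where $s_{z_k,z_{k+1}}(\mu)=\mathbb{E}_{Z\sim\mu}[h_{z_k,z_{k+1}}(Z)]$, is not Bellman closed. (ii) For every $K\ge1$, the set of QDRL statistics $\{\mu\mapsto F_\mu^{-1}(\tau_k): k=1,\dots,K\}$ with $\tau_k=\frac{2k-1}{2K}$ is not Bellman closed.
   Context: For $a<b$, $h_{a,b}:\mathbb{R}\to\mathbb{R}$ is the piecewise linear function with $h_{a,b}(x)=1$ for $x\le a$, $h_{a,b}(x)=0$ for $x\ge b$, and $h_{a,b}(x)=(b-x)/(b-a)$ for $x\in[a,b]$. For a distribution $\mu$ with CDF $F_\mu$, $F_\mu^{-1}(\tau)=\inf\{z\in\mathbb{R}:F_\mu(z)\ge\tau\}$. MDP setting: finite state space $\mathcal X$, finite action space $\mathcal A$, transition kernel $p$, discount $\gamma\in[0,1)$, reward distributions $\mathcal R(\cdot\mid x,a)$; policy $\pi:\mathcal X\to\mathscr P(\mathcal A)$; given $X_0=x,A_0=a$, $R_t\sim\mathcal R(\cdot\mid X_t,A_t)$, $X_{t+1}\sim p(\cdot\mid X_t,A_t)$, $A_{t+1}\sim\pi(\cdot\mid X_{t+1})$; $\eta^\pi(x,a)$ is the law of $\sum_t\gamma^tR_t$. Bellman closedness: a finite set of statistics $\{s_1,\dots,s_K\}$ is Bellman closed if for each $\gamma\in[0,1)$ there is a single map $G_\gamma$ such that for every MDP with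 discount $\gamma$, every policy $\pi$ and every $(x,a)$, $s_{1:K}(\eta^\pi(x,a))=G_\gamma\big(\mathrm{Law}(R_0,s_{1:K}(\eta^\pi(X_1,A_1))\mid X_0=x,A_0=a)\big)$. *)

theory Defs
  imports "HOL-Probability.Probability"
begin

definition hfun :: "real \<Rightarrow> real \<Rightarrow> real \<Rightarrow> real" where
  "hfun a b x = (if x \<le> a then 1 else if x \<ge> b then 0 else (b - x) / (b - a))"

definition cdrl_stat :: "real \<Rightarrow> real \<Rightarrow> real measure \<Rightarrow> real" where
  "cdrl_stat a b \<mu> = (\<integral>z. hfun a b z \<partial>\<mu>)"

definition quantile :: "real measure \<Rightarrow> real \<Rightarrow> real" where
  "quantile \<mu> \<tau> = Inf {z. cdf \<mu> z \<ge> \<tau>}"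

text \<open>Finite MDPs, states and actions coded as natural numbers in finite carrier sets.
  Rewards are finitely supported distributions (so returns are bounded).\<close>
definition is_mdp ::
  "nat set \<Rightarrow> nat set \<Rightarrow> (nat \<Rightarrow> nat \<Rightarrow> nat pmf) \<Rightarrow> (nat \<Rightarrow> nat \<Rightarrow> real pmf) \<Rightarrow> bool" where
  "is_mdp X A p R \<longleftrightarrow> finite X \<and> finite A \<and>
     (\<forall>x\<in>X. \<forall>a\<in>A. set_pmf (p x a) \<subseteq> X \<and> finite (set_pmf (R x a)))"

definition is_policy :: "nat set \<Rightarrow> nat set \<Rightarrow> (nat \<Rightarrow> nat pmf) \<Rightarrow> bool" where
  "is_policy X A \<pi> \<longleftrightarrow> (\<forall>x\<in>X. set_pmf (\<pi> x) \<subseteq> A)"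

text \<open>Law of the n-step truncated return sum_{t<n} gamma^t R_t given X_0 = x, A_0 = a.\<close>
fun ret :: "real \<Rightarrow> (nat \<Rightarrow> nat \<Rightarrow> nat pmf) \<Rightarrow> (nat \<Rightarrow> nat \<Rightarrow> real pmf) \<Rightarrow> (nat \<Rightarrow> nat pmf)
             \<Rightarrow> nat \<Rightarrow> nat \<Rightarrow> nat \<Rightarrow> real pmf" where
  "ret \<gamma> p R \<pi> 0 x a = return_pmf 0"
| "ret \<gamma> p R \<pi> (Suc n) x a =
     bind_pmf (R x a) (\<lambda>r. bind_pmf (p x a) (\<lambda>x'. bind_pmf (\<pi> x') (\<lambda>a'.
       map_pmf (\<lambda>g. r + \<gamma> * g) (ret \<gamma> p R \<pi> n x' a'))))"

text \<open>eta is the return distribution eta^pi: the law of sum_t gamma^t R_t, i.e. the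
  (weak) limit of the laws of the truncated sums.\<close>
definition is_return_dist ::
  "real \<Rightarrow> nat set \<Rightarrow> nat set \<Rightarrow> (nat \<Rightarrow> nat \<Rightarrow> nat pmf) \<Rightarrow> (nat \<Rightarrow> nat \<Rightarrow> real pmf)
     \<Rightarrow> (nat \<Rightarrow> nat pmf) \<Rightarrow> (nat \<Rightarrow> nat \<Rightarrow> real measure) \<Rightarrow> bool" where
  "is_return_dist \<gamma> X A p R \<pi> \<eta> \<longleftrightarrow>
     (\<forall>x\<in>X. \<forall>a\<in>A. real_distribution (\<eta> x a) \<and>
        weak_conv_m (\<lambda>n. measure_pmf (ret \<gamma> p R \<pi> n x a)) (\<eta> x a))"

definition bellman_law ::
  "(real measure \<Rightarrow> real) list \<Rightarrow> (nat \<Rightarrow> nat \<Rightarrow> nat pmf) \<Rightarrow> (nat \<Rightarrow> nat \<Rightarrow> real pmf)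
     \<Rightarrow> (nat \<Rightarrow> nat pmf) \<Rightarrow> (nat \<Rightarrow> nat \<Rightarrow> real measure) \<Rightarrow> nat \<Rightarrow> nat \<Rightarrow> (real \<times> real list) pmf" where
  "bellman_law ss p R \<pi> \<eta> x a =
     bind_pmf (R x a) (\<lambda>r. bind_pmf (p x a) (\<lambda>x'. bind_pmf (\<pi> x') (\<lambda>a'.
       return_pmf (r, map (\<lambda>s. s (\<eta> x' a')) ss))))"

definition bellman_closed :: "(real measure \<Rightarrow> real) list \<Rightarrow> bool" where
  "bellman_closed ss \<longleftrightarrow>
     (\<forall>\<gamma>::real. 0 \<le> \<gamma> \<and> \<gamma> < 1 \<longrightarrow>
        (\<exists>G :: (real \<times> real list) pmf \<Rightarrow> real list.
           \<forall>X A p R \<pi> \<eta>. is_mdp X A p R \<and> is_policy X A \<pi> \<and> is_return_dist \<gamma> X A p R \<pi> \<eta> \<longrightarrow>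
              (\<forall>x\<in>X. \<forall>a\<in>A. map (\<lambda>s. s (\<eta> x a)) ss = G (bellman_law ss p R \<pi> \<eta> x a))))"

end

theory Submission imports Defs begin

text \<open>Both parts are refuted by a three-state chain with a single action: from the start
  state 0 one collects a reward and moves to state 1 or to the absorbing zero-reward state 2;
  state 1 pays one more reward and then moves to state 2. A Bellman-closed family determines
  the statistics of the return at 0 from the law of the first reward and the statistics of
  the returns at 1 and 2. So it suffices to exhibit two rewards at state 1 whose laws have the
  same statistics, while the two resulting returns at 0 do not. For CDRL, rewards \<open>c \<pm> d\<close>
  both lie below the first bin, yet after discounting by \<open>1/2\<close> and shifting they land inside
  and below that bin. For QDRL, a reward 1 and a reward that is 0 with a small probability
  have the same quantiles, but mixing with a point mass at 0 moves the top quantile level onto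
  the atom at 0.\<close>

text \<open>\<open>measure_pmf\<close> carries the discrete \<sigma>-algebra; return distributions must live on \<open>borel\<close>.\<close>
definition real_law :: "real pmf \<Rightarrow> real measure" where
  "real_law P = distr (measure_pmf P) borel (\<lambda>x. x)"

lemma real_distribution_real_law: "real_distribution (real_law P)"
  unfolding real_law_def real_distribution_def real_distribution_axioms_def
  by (auto intro!: measure_pmf.prob_space_distr)

lemma cdf_real_law: "cdf (real_law P) z = measure_pmf.prob P {..z}"
  unfolding real_law_def cdf_def by (simp add: measure_distr)

lemma weak_conv_m_eventually_const:
  assumes "\<And>n. n \<ge> N \<Longrightarrow> f n = P"
  shows "weak_conv_m (\<lambda>n. measure_pmf (f n)) (real_law P)"
  unfolding weak_conv_m_def weak_conv_def
proof (intro allI impI)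
  fix x
  have cdf_pmf: "cdf (measure_pmf Q) x = measure_pmf.prob Q {..x}" for Q
    by (simp add: cdf_def)
  have "eventually (\<lambda>n. cdf (measure_pmf (f n)) x = cdf (real_law P) x) sequentially"
    using assms by (auto simp: cdf_real_law cdf_pmf eventually_sequentially)
  then show "(\<lambda>n. cdf (measure_pmf (f n)) x) \<longlonglongrightarrow> cdf (real_law P) x"
    by (rule tendsto_eventually)
qed

lemma measure_pmf_prob_bind:
  "measure_pmf.prob (bind_pmf M N) S = (\<integral>x. measure_pmf.prob (N x) S \<partial>M)"
proof -
  have "emeasure (measure_pmf (bind_pmf M N)) S = (\<integral>\<^sup>+x. ennreal (measure_pmf.prob (N x) S) \<partial>M)"
    by (subst emeasure_bind_pmf) (simp add: measure_pmf.emeasure_eq_measure)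
  also have "\<dots> = ennreal (\<integral>x. measure_pmf.prob (N x) S \<partial>M)"
    by (rule nn_integral_eq_integral) (auto intro!: measure_pmf.integrable_const_bound[where B=1])
  finally show ?thesis
    by (simp add: measure_pmf.emeasure_eq_measure)
qed

lemma quantile_eqI:
  assumes "cdf \<mu> v \<ge> \<tau>" and "\<And>z. z < v \<Longrightarrow> cdf \<mu> z < \<tau>"
  shows "quantile \<mu> \<tau> = v"
  unfolding quantile_def
  by (rule cInf_eq_minimum) (use assms in \<open>auto simp: not_less[symmetric]\<close>)

lemma cdrl_stat_real_law_return: "cdrl_stat a b (real_law (return_pmf y)) = hfun a b y"
proof -
  have "hfun a b \<in> borel_measurable borel"
    unfolding hfun_def by measurable
  then show ?thesis
    unfolding cdrl_stat_def real_law_def by (simp add: integral_distr)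
qed

definition chain_trans :: "nat pmf \<Rightarrow> nat \<Rightarrow> nat \<Rightarrow> nat pmf" where
  "chain_trans p0 x a = (if x = 0 then p0 else return_pmf 2)"

definition chain_reward :: "real pmf \<Rightarrow> real pmf \<Rightarrow> nat \<Rightarrow> nat \<Rightarrow> real pmf" where
  "chain_reward R0 R1 x a = (if x = 0 then R0 else if x = 1 then R1 else return_pmf 0)"

definition chain_policy :: "nat \<Rightarrow> nat pmf" where
  "chain_policy x = return_pmf 0"

definition start_return :: "real \<Rightarrow> real pmf \<Rightarrow> nat pmf \<Rightarrow> real pmf \<Rightarrow> real pmf" where
  "start_return \<gamma> R0 p0 R1 = bind_pmf R0 (\<lambda>r. bind_pmf p0 (\<lambda>x'.
     map_pmf (\<lambda>g. r + \<gamma> * g) (if x' = 1 then R1 else return_pmf 0)))"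

definition chain_return :: "real \<Rightarrow> real pmf \<Rightarrow> nat pmf \<Rightarrow> real pmf \<Rightarrow> nat \<Rightarrow> nat \<Rightarrow> real pmf" where
  "chain_return \<gamma> R0 p0 R1 x a =
     (if x = 0 then start_return \<gamma> R0 p0 R1 else if x = 1 then R1 else return_pmf 0)"

abbreviation chain_ret :: "real \<Rightarrow> real pmf \<Rightarrow> nat pmf \<Rightarrow> real pmf \<Rightarrow> nat \<Rightarrow> nat \<Rightarrow> nat \<Rightarrow> real pmf" where
  "chain_ret \<gamma> R0 p0 R1 \<equiv> ret \<gamma> (chain_trans p0) (chain_reward R0 R1) chain_policy"

lemma chain_ret_absorbing: "chain_ret \<gamma> R0 p0 R1 n 2 a = return_pmf 0"
  by (induction n arbitrary: a)
     (auto simp: chain_trans_def chain_reward_def chain_policy_def bind_return_pmf)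

lemma chain_ret_Suc_nonstart:
  "x \<noteq> 0 \<Longrightarrow> chain_ret \<gamma> R0 p0 R1 (Suc n) x a = chain_return \<gamma> R0 p0 R1 x a"
  by (auto simp: chain_ret_absorbing chain_trans_def chain_reward_def chain_policy_def
      chain_return_def bind_return_pmf bind_return_pmf')

lemma chain_ret_eventually:
  assumes "set_pmf p0 \<subseteq> {1, 2}" and "n \<ge> 2"
  shows "chain_ret \<gamma> R0 p0 R1 n x a = chain_return \<gamma> R0 p0 R1 x a"
proof -
  obtain m where n: "n = Suc (Suc m)"
    using \<open>n \<ge> 2\<close> by (metis add_2_eq_Suc le_Suc_ex)
  have "chain_ret \<gamma> R0 p0 R1 n 0 a =
     bind_pmf R0 (\<lambda>r. bind_pmf p0 (\<lambda>x'.
       map_pmf (\<lambda>g. r + \<gamma> * g) (chain_ret \<gamma> R0 p0 R1 (Suc m) x' 0)))"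
    by (simp add: n chain_trans_def chain_reward_def chain_policy_def bind_return_pmf)
  also have "\<dots> = chain_return \<gamma> R0 p0 R1 0 a"
    using assms(1) by (auto simp: chain_ret_Suc_nonstart chain_return_def start_return_def
        simp del: ret.simps intro!: bind_pmf_cong)
  finally show ?thesis
    using chain_ret_Suc_nonstart[of x \<gamma> p0 R0 R1 "Suc m" a] n by (cases "x = 0") simp_all
qed

lemma chain_is_return_dist:
  assumes "finite (set_pmf R0)" "finite (set_pmf R1)" "set_pmf p0 \<subseteq> {1, 2}"
  shows "is_mdp {0, 1, 2} {0} (chain_trans p0) (chain_reward R0 R1)"
    and "is_policy {0, 1, 2} {0} chain_policy"
    and "is_return_dist \<gamma> {0, 1, 2} {0} (chain_trans p0) (chain_reward R0 R1) chain_policy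
           (\<lambda>x a. real_law (chain_return \<gamma> R0 p0 R1 x a))"
  using assms
  by (auto simp: is_mdp_def is_policy_def is_return_dist_def chain_trans_def chain_reward_def
      chain_policy_def real_distribution_real_law chain_ret_eventually
      intro!: weak_conv_m_eventually_const[where N = 2])

lemma not_bellman_closed_by_chain:
  assumes "0 \<le> \<gamma>" "\<gamma> < 1"
    and "finite (set_pmf R0)" "finite (set_pmf R1)" "finite (set_pmf R2)"
    and p0: "set_pmf p0 \<subseteq> {1, 2}"
    and same: "\<forall>s \<in> set ss. s (real_law R1) = s (real_law R2)"
    and differ: "\<exists>s \<in> set ss. s (real_law (start_return \<gamma> R0 p0 R1))
                              \<noteq> s (real_law (start_return \<gamma> R0 p0 R2))"
  shows "\<not> bellman_closed ss"
proof
  assume "bellman_closed ss"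
  then obtain G where G: "\<And>X A p R \<pi> \<eta>.
      is_mdp X A p R \<and> is_policy X A \<pi> \<and> is_return_dist \<gamma> X A p R \<pi> \<eta> \<Longrightarrow>
      \<forall>x\<in>X. \<forall>a\<in>A. map (\<lambda>s. s (\<eta> x a)) ss = G (bellman_law ss p R \<pi> \<eta> x a)"
    unfolding bellman_closed_def using assms(1,2) by blast
  define law where "law R = bellman_law ss (chain_trans p0) (chain_reward R0 R) chain_policy
      (\<lambda>x a. real_law (chain_return \<gamma> R0 p0 R x a)) 0 0" for R
  have stats: "map (\<lambda>s. s (real_law (start_return \<gamma> R0 p0 R))) ss = G (law R)"
    if "finite (set_pmf R)" for R
  proof -
    have "is_mdp {0, 1, 2} {0} (chain_trans p0) (chain_reward R0 R) \<and>
        is_policy {0, 1, 2} {0} chain_policy \<and>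
        is_return_dist \<gamma> {0, 1, 2} {0} (chain_trans p0) (chain_reward R0 R) chain_policy
          (\<lambda>x a. real_law (chain_return \<gamma> R0 p0 R x a))"
      using chain_is_return_dist[OF assms(3) that p0] by blast
    from G[OF this] show ?thesis
      by (auto simp: law_def chain_return_def)
  qed
  have "law R1 = law R2"
    unfolding law_def bellman_law_def using p0 same
    by (auto simp: chain_trans_def chain_reward_def chain_policy_def chain_return_def
        bind_return_pmf intro!: bind_pmf_cong)
  with stats[OF assms(4)] stats[OF assms(5)]
  have "map (\<lambda>s. s (real_law (start_return \<gamma> R0 p0 R1))) ss
      = map (\<lambda>s. s (real_law (start_return \<gamma> R0 p0 R2))) ss"
    by simp
  with differ show False
    by (simp add: map_eq_conv)
qed

lemma cdrl_not_bellman_closed: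
  fixes c d :: real
  assumes "K \<ge> 2" and "d > 0"
  shows "\<not> bellman_closed (map (\<lambda>k. cdrl_stat (c + real k * d) (c + real (Suc k) * d)) [1..<K])"
proof (rule not_bellman_closed_by_chain[of "1/2" "return_pmf (c/2 + d)" "return_pmf (c + d)"
      "return_pmf (c - d)" "return_pmf 1"])
  have start: "start_return (1/2) (return_pmf (c/2 + d)) (return_pmf 1) (return_pmf v)
      = return_pmf (c/2 + d + v/2)" for v
    by (simp add: start_return_def bind_return_pmf)
  have "hfun (c + real k * d) b y = 1" if "1 \<le> k" and "y \<le> c + d" for k b y
  proof -
    have "d \<le> real k * d"
      using \<open>d > 0\<close> that(1) by simp
    then show ?thesis
      using that(2) by (simp add: hfun_def)
  qed
  then show "\<forall>s \<in> set (map (\<lambda>k. cdrl_stat (c + real k * d) (c + real (Suc k) * d)) [1..<K]).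
      s (real_law (return_pmf (c + d))) = s (real_law (return_pmf (c - d)))"
    using \<open>d > 0\<close> by (auto simp: cdrl_stat_real_law_return)
  have "hfun (c + d) (c + 2 * d) (c/2 + d + (c + d)/2) = 1/2"
    and "hfun (c + d) (c + 2 * d) (c/2 + d + (c - d)/2) = 1"
    using \<open>d > 0\<close> by (simp_all add: hfun_def field_simps)
  moreover have "1 \<in> set [1..<K]"
    using \<open>K \<ge> 2\<close> by simp
  ultimately show "\<exists>s \<in> set (map (\<lambda>k. cdrl_stat (c + real k * d) (c + real (Suc k) * d)) [1..<K]).
      s (real_law (start_return (1/2) (return_pmf (c/2 + d)) (return_pmf 1) (return_pmf (c + d))))
      \<noteq> s (real_law (start_return (1/2) (return_pmf (c/2 + d)) (return_pmf 1) (return_pmf (c - d))))"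
    unfolding start
    by (intro bexI[where x = "cdrl_stat (c + d) (c + 2 * d)"])
       (auto simp: cdrl_stat_real_law_return intro!: rev_image_eqI[where x = 1])
qed auto

lemma cdf_start_return_half:
  assumes "0 \<le> q" "q \<le> 1"
  shows "cdf (real_law (start_return (1/2) (return_pmf 0)
            (map_pmf (\<lambda>b. if b then 1 else 2) (bernoulli_pmf q)) R)) z
       = q * measure_pmf.prob R {..2 * z} + (1 - q) * (if 0 \<le> z then 1 else 0)"
proof -
  have "(\<lambda>g. g / 2) -` {..z} = {..2 * z}" by auto
  then show ?thesis
    using assms by (simp add: cdf_real_law start_return_def bind_return_pmf measure_pmf_prob_bind
        map_pmf_def[symmetric] bind_map_pmf)
qed

lemma qdrl_not_bellman_closed:
  assumes "K \<ge> 1"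
  shows "\<not> bellman_closed (map (\<lambda>k. \<lambda>\<mu>. quantile \<mu> ((2 * real k - 1) / (2 * real K))) [1..<Suc K])"
proof -
  define e :: real where "e = 1 / (4 * real K)"
  define q :: real where "q = 2 / (4 * real K - 1)"
  define \<tau>\<^sub>K :: real where "\<tau>\<^sub>K = (2 * real K - 1) / (2 * real K)"
  define R :: "real pmf" where "R = map_pmf (\<lambda>b. if b then 0 else 1) (bernoulli_pmf e)"
  let ?start = "start_return (1/2) (return_pmf 0) (map_pmf (\<lambda>b. if b then 1 else 2) (bernoulli_pmf q))"
  have K: "real K \<ge> 1"
    using assms by simp
  have e: "0 < e" "e < 1" and q: "0 < q" "q < 1"
    using K by (auto simp: e_def q_def field_simps)
  have "1 - q < \<tau>\<^sub>K" and "\<tau>\<^sub>K \<le> 1"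
    using K by (simp_all add: q_def \<tau>\<^sub>K_def field_simps)
  \<comment> \<open>with reward \<open>R\<close> the atom at 0 of the start return has mass exactly \<open>\<tau>\<^sub>K\<close>\<close>
  have "e * q + (1 - q) = \<tau>\<^sub>K"
  proof -
    have "4 * real K - 1 > 0"
      using K by simp
    then have "q * (1 - e) = 1 / (2 * real K)"
      using K by (simp add: q_def e_def field_simps)
    then show ?thesis
      using K by (simp add: \<tau>\<^sub>K_def field_simps)
  qed
  have prob_R: "measure_pmf.prob R S = e * indicator S 0 + (1 - e) * indicator S 1" for S
    using e by (simp add: R_def measure_pmf_prob_bind map_pmf_def)
  show ?thesis
  proof (rule not_bellman_closed_by_chain[of "1/2" "return_pmf 0" "return_pmf 1" R
        "map_pmf (\<lambda>b. if b then 1 else 2) (bernoulli_pmf q)"])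
    show "finite (set_pmf R)"
      by (simp add: R_def)
    show "\<forall>s \<in> set (map (\<lambda>k \<mu>. quantile \<mu> ((2 * real k - 1) / (2 * real K))) [1..<Suc K]).
        s (real_law (return_pmf 1)) = s (real_law R)"
    proof -
      have "quantile (real_law (return_pmf 1)) \<tau> = quantile (real_law R) \<tau>"
        if \<tau>: "e < \<tau>" "\<tau> \<le> 1" for \<tau>
      proof -
        have "quantile (real_law (return_pmf 1)) \<tau> = 1"
          by (rule quantile_eqI) (use \<tau> e in \<open>auto simp: cdf_real_law\<close>)
        moreover have "quantile (real_law R) \<tau> = 1"
          by (rule quantile_eqI) (use \<tau> e in \<open>auto simp: cdf_real_law prob_R indicator_def\<close>)
        ultimately show ?thesis
          by simp
      qed
      moreover have "e < (2 * real k - 1) / (2 * real K)" and "(2 * real k - 1) / (2 * real K) \<le> 1"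
        if "1 \<le> k" "k \<le> K" for k
        using that K by (auto simp: e_def field_simps)
      ultimately show ?thesis
        by auto
    qed
    have "quantile (real_law (?start (return_pmf 1))) \<tau>\<^sub>K = 1/2"
      by (rule quantile_eqI)
        (use q \<open>1 - q < \<tau>\<^sub>K\<close> \<open>\<tau>\<^sub>K \<le> 1\<close> in \<open>auto simp: cdf_start_return_half\<close>)
    moreover have "quantile (real_law (?start R)) \<tau>\<^sub>K = 0"
      by (rule quantile_eqI)
        (use q e \<open>1 - q < \<tau>\<^sub>K\<close> \<open>e * q + (1 - q) = \<tau>\<^sub>K\<close> in
          \<open>auto simp: cdf_start_return_half prob_R indicator_def\<close>)
    ultimately show "\<exists>s \<in> set (map (\<lambda>k \<mu>. quantile \<mu> ((2 * real k - 1) / (2 * real K))) [1..<Suc K]).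
        s (real_law (?start (return_pmf 1))) \<noteq> s (real_law (?start R))"
      using assms by (auto simp: \<tau>\<^sub>K_def intro!: bexI[where x = "\<lambda>\<mu>. quantile \<mu> \<tau>\<^sub>K"])
  qed auto
qed

theorem lemma3:
  shows "(\<forall>(K::nat) (c::real) (d::real). K \<ge> 2 \<and> d > 0 \<longrightarrow>
            (let z = (\<lambda>k::nat. c + real k * d)
             in \<not> bellman_closed (map (\<lambda>k. cdrl_stat (z k) (z (Suc k))) [1..<K])))
       \<and> (\<forall>K::nat. K \<ge> 1 \<longrightarrow>
            \<not> bellman_closed (map (\<lambda>k. \<lambda>\<mu>. quantile \<mu> ((2 * real k - 1) / (2 * real K))) [1..<Suc K]))"
  using cdrl_not_bellman_closed qdrl_not_bellman_closed by (simp add: Let_def)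

end
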